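(* For every integer $n\ge1$, $$\frac{[(2n)!]^2}{(2n-1)!\,(2n+1)!}=\sum_{k=1}^n\binom{2n}{2k}\frac{2^{2k}B_{2k}}{2n-2k+1}.$$
   Context: Bernoulli numbers $B_n$ are defined by $\frac{t}{e^t-1}=\sum_{n\ge0}B_nt^n/n!$. *)

theory Defs
  imports "HOL-Analysis.Analysis" "HOL-Computational_Algebra.Formal_Power_Series"
begin

definition bernoulli :: "nat \<Rightarrow> real" where
  "bernoulli n = fact n * fps_nth (fps_X / (fps_exp 1 - 1)) n"

end

theory Submission imports Defs begin

text \<open>
  Let b(x) = x/(e^x - 1) be the exponential generating function of
  the Bernoulli numbers.  Then h(x) = b(2x) e^x = 2x e^x/(e^(2x) - 1) = x/sinh x
  is an even power series, and by the Cauchy product its m-th coefficient is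
  (1/m!) * sum_(j<=m) C(m,j) 2^j B_j.  Hence this binomial sum vanishes for odd m.
  Taking m = 2n+1 and using B_0 = 1, B_1 = -1/2 and B_j = 0 for odd j > 1 gives
  sum_(k=1..n) C(2n+1,2k) 2^(2k) B_(2k) = 2n.  Dividing by 2n+1 and using
  C(2n+1,2k)/(2n+1) = C(2n,2k)/(2n-2k+1) turns the left side into the sum of the
  theorem, while the factorial quotient of the theorem simplifies to 2n/(2n+1).
\<close>

definition bernoulli_gf :: "'a::field_char_0 fps" where
  "bernoulli_gf = fps_X / (fps_exp 1 - 1)"

lemma bernoulli_eq_gf: "bernoulli n = fact n * fps_nth (bernoulli_gf :: real fps) n"
  by (simp add: bernoulli_def bernoulli_gf_def)

text \<open>The defining equation b(x) (e^x - 1) = x; the division is exact because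
  e^x - 1 is nonzero of subdegree 1.\<close>
lemma bernoulli_gf_times: "bernoulli_gf * (fps_exp 1 - 1) = (fps_X :: 'a::field_char_0 fps)"
proof -
  have nz: "fps_exp (1::'a) - 1 \<noteq> 0"
  proof
    assume "fps_exp (1::'a) - 1 = 0"
    then have "fps_nth (fps_exp (1::'a) - 1) 1 = 0" by simp
    then show False by simp
  qed
  have "subdegree (fps_exp (1::'a) - 1) \<le> 1"
    by (rule subdegree_leI) simp
  then have "subdegree (fps_exp (1::'a) - 1) \<le> subdegree (fps_X :: 'a fps)"
    by simp
  then show ?thesis
    unfolding bernoulli_gf_def by (rule fps_times_divide_eq[OF nz])
qed

lemma bernoulli_gf_scaled:
  fixes c :: "'a::field_char_0"
  shows "(bernoulli_gf oo (fps_const c * fps_X)) * (fps_exp c - 1) = fps_const c * fps_X"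
proof -
  let ?M = "fps_const c * fps_X"
  have M0: "fps_nth ?M 0 = 0" by simp
  have "(bernoulli_gf * (fps_exp 1 - 1)) oo ?M = ?M"
    by (simp add: bernoulli_gf_times M0)
  then show ?thesis
    by (simp add: fps_compose_mult_distrib[OF M0] fps_compose_sub_distrib)
qed

lemma fps_const_minus_one_times_X: "fps_const (-1) * fps_X = - (fps_X :: 'a::ring_1 fps)"
  by (simp add: fps_eq_iff)

text \<open>Reflection law b(-x) = b(x) + x: both sides solve F (1 - e^x) = -x e^x,
  and 1 - e^x is not a zero divisor.\<close>
lemma bernoulli_gf_reflect:
  "bernoulli_gf oo - fps_X = bernoulli_gf + (fps_X :: 'a::field_char_0 fps)"
proof -
  let ?b = "bernoulli_gf :: 'a fps" and ?e = "fps_exp (1::'a)"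
  let ?R = "?b oo - fps_X"
  have inv: "fps_exp (-1) * ?e = 1"
    by (simp add: fps_exp_add_mult[symmetric])
  have scaled: "?R * (fps_exp (-1) - 1) = - fps_X"
    using bernoulli_gf_scaled[of "-1::'a"] by (simp add: fps_const_minus_one_times_X)
  have "?R * (1 - ?e) = ?R * ((fps_exp (-1) - 1) * ?e)"
    by (simp add: left_diff_distrib inv)
  also have "\<dots> = - fps_X * ?e"
    by (simp only: mult.assoc[symmetric] scaled)
  finally have R: "?R * (1 - ?e) = - fps_X * ?e" .
  have "(?b + fps_X) * (1 - ?e) = - (?b * (?e - 1)) - fps_X * (?e - 1)"
    by (simp add: algebra_simps)
  also have "\<dots> = - fps_X - fps_X * (?e - 1)"
    by (simp only: bernoulli_gf_times)
  also have "\<dots> = - fps_X * ?e"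
    by (simp add: algebra_simps)
  finally have "(?b + fps_X) * (1 - ?e) = - fps_X * ?e" .
  moreover have "1 - ?e \<noteq> 0"
  proof
    assume "1 - ?e = 0"
    then have "fps_nth (1 - ?e) 1 = 0" by simp
    then show False by simp
  qed
  ultimately show ?thesis
    using R by (metis mult_right_cancel)
qed

lemma bernoulli_gf_nth_reflect:
  "(-1)^n * fps_nth (bernoulli_gf :: 'a::field_char_0 fps) n
     = fps_nth bernoulli_gf n + (if n = 1 then 1 else 0)"
  using arg_cong[OF bernoulli_gf_reflect, of "\<lambda>F. fps_nth F n"]
  by (simp add: fps_compose_uminus')

lemma bernoulli_gf_nth_0: "fps_nth (bernoulli_gf :: 'a::field_char_0 fps) 0 = 1"
proof -
  have "fps_nth (bernoulli_gf * (fps_exp 1 - 1) :: 'a fps) 1 = 1"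
    by (simp only: bernoulli_gf_times) simp
  then show ?thesis by (simp add: fps_mult_nth_1)
qed

lemma bernoulli_0: "bernoulli 0 = 1"
  by (simp add: bernoulli_eq_gf bernoulli_gf_nth_0)

lemma bernoulli_1: "bernoulli 1 = -1/2"
  using bernoulli_gf_nth_reflect[of 1, where 'a=real] by (simp add: bernoulli_eq_gf)

lemma bernoulli_odd: "odd n \<Longrightarrow> n \<noteq> 1 \<Longrightarrow> bernoulli n = 0"
  using bernoulli_gf_nth_reflect[of n, where 'a=real] by (simp add: bernoulli_eq_gf)

definition x_over_sinh :: "'a::field_char_0 fps" where
  "x_over_sinh = (bernoulli_gf oo (fps_const 2 * fps_X)) * fps_exp 1"

lemma x_over_sinh_times:
  "x_over_sinh * (fps_exp 1 - fps_exp (-1)) = fps_const 2 * (fps_X :: 'a::field_char_0 fps)"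
proof -
  have "fps_exp (1::'a) * (fps_exp 1 - fps_exp (-1)) = fps_exp 2 - 1"
    by (simp add: algebra_simps fps_exp_add_mult[symmetric])
  then show ?thesis
    unfolding x_over_sinh_def using bernoulli_gf_scaled[of "2::'a"]
    by (simp add: mult.assoc)
qed

text \<open>h(-x) satisfies the same equation, and e^x - e^(-x) is not a zero divisor,
  so h is even.\<close>
lemma x_over_sinh_even:
  "x_over_sinh oo - fps_X = (x_over_sinh :: 'a::field_char_0 fps)"
proof -
  let ?M = "- fps_X :: 'a fps" and ?D = "fps_exp 1 - fps_exp (-1) :: 'a fps"
  have M0: "fps_nth ?M 0 = 0" by simp
  have "(x_over_sinh * ?D) oo ?M = fps_const 2 * fps_X oo ?M"
    by (simp only: x_over_sinh_times)
  then have "(x_over_sinh oo ?M) * (- ?D) = - (fps_const 2 * fps_X)"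
    by (simp add: fps_compose_mult_distrib[OF M0] fps_compose_sub_distrib)
  then have "(x_over_sinh oo ?M) * ?D = fps_const 2 * fps_X"
    by (simp add: algebra_simps)
  also have "\<dots> = x_over_sinh * ?D"
    by (simp only: x_over_sinh_times)
  moreover have "?D \<noteq> 0"
  proof
    assume "?D = 0"
    then have "fps_nth ?D 1 = 0" by simp
    then show False by simp
  qed
  ultimately show ?thesis by (metis mult_right_cancel)
qed

lemma x_over_sinh_nth_odd:
  "odd m \<Longrightarrow> fps_nth (x_over_sinh :: 'a::field_char_0 fps) m = 0"
  using arg_cong[OF x_over_sinh_even, of "\<lambda>F. fps_nth F m"] by (simp add: fps_compose_uminus')

text \<open>The Cauchy product of b(2x) and e^x gives the binomial sum of Bernoulli numbers.\<close>
lemma bernoulli_binomial_sum: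
  "(\<Sum>j=0..m. real (m choose j) * 2^j * bernoulli j) = fact m * fps_nth x_over_sinh m"
proof -
  have "fps_nth x_over_sinh m = (\<Sum>j=0..m. 2^j * fps_nth (bernoulli_gf :: real fps) j / fact (m - j))"
    by (simp add: x_over_sinh_def fps_mult_nth)
  moreover have "real (m choose j) * 2^j * bernoulli j
      = fact m * (2^j * fps_nth (bernoulli_gf :: real fps) j / fact (m - j))" if "j \<le> m" for j
    using that by (simp add: binomial_fact bernoulli_eq_gf field_simps)
  ultimately show ?thesis by (simp add: sum_distrib_left)
qed

lemma bernoulli_binomial_sum_odd:
  "odd m \<Longrightarrow> (\<Sum>j=0..m. real (m choose j) * 2^j * bernoulli j) = 0"
  by (simp add: bernoulli_binomial_sum x_over_sinh_nth_odd)

lemma sum_even_odd_split: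
  fixes f :: "nat \<Rightarrow> 'a::comm_monoid_add"
  shows "(\<Sum>j<2*N. f j) = (\<Sum>k<N. f (2*k) + f (2*k+1))"
  by (induction N) (simp_all add: algebra_simps)

text \<open>In the vanishing sum for m = 2n+1 only B_0, B_1 and the even-index terms survive.\<close>
lemma bernoulli_even_binomial_sum:
  "(\<Sum>k=1..n. real ((2*n+1) choose (2*k)) * 2^(2*k) * bernoulli (2*k)) = real (2*n)"
proof -
  define f where "f j = real ((2*n+1) choose j) * 2^j * bernoulli j" for j
  have "{0..2*n+1} = {..<2*(n+1)}" by auto
  then have "(\<Sum>j<2*(n+1). f j) = 0"
    using bernoulli_binomial_sum_odd[of "2*n+1"] by (simp add: f_def)
  then have "(\<Sum>k<n+1. f (2*k) + f (2*k+1)) = 0"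
    by (simp only: sum_even_odd_split)
  moreover have "f (2*k+1) = (if k = 0 then - real (2*n+1) else 0)" for k
    by (simp add: f_def bernoulli_1[simplified] bernoulli_odd field_simps)
  ultimately have "(\<Sum>k<n+1. f (2*k)) = real (2*n+1)"
    by (simp add: sum.distrib split: if_splits)
  moreover have "(\<Sum>k<n+1. f (2*k)) = f 0 + (\<Sum>k=1..n. f (2*k))"
    by (simp add: lessThan_Suc_atMost sum.atLeast_Suc_atMost atLeast0AtMost[symmetric])
  moreover have "f 0 = 1" by (simp add: f_def bernoulli_0)
  ultimately show ?thesis by (simp add: f_def)
qed

lemma binomial_absorb_real:
  fixes x :: real
  assumes "j \<le> m"
  shows "real (m choose j) * x / real (m - j + 1) = real ((m+1) choose j) * x / real (m+1)"
proof -
  have "(m + 1 - j) * ((m+1) choose j) = (m+1) * (m choose j)"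
    using binomial_absorb_comp[of "m+1" j] by simp
  then have "real (m - j + 1) * real ((m+1) choose j) = real (m+1) * real (m choose j)"
    using assms by (metis Suc_diff_le Suc_eq_plus1 of_nat_mult)
  then show ?thesis by (simp add: field_simps)
qed

lemma fact_square_quotient:
  assumes "m \<ge> 1"
  shows "(fact m)^2 / (fact (m - 1) * fact (m + 1)) = (real m / real (m+1) :: real)"
proof -
  define F :: real where "F = fact (m - 1)"
  have F: "F > 0" unfolding F_def by simp
  have m: "real m > 0" using assms by simp
  have fm: "fact m = real m * F"
    unfolding F_def using assms by (simp add: fact_reduce) 
  have "(fact m)^2 / (fact (m - 1) * fact (m + 1)) = (real m * F) * (real m * F) / (real m * F * (real (m+1) * F))"
    unfolding fm F_def[symmetric] by (simp add: power2_eq_square fm mult_ac)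
  also have "\<dots> = real m / real (m+1)"
    using F m by simp
  finally show ?thesis .
qed

theorem mainTheorem20:
  fixes n :: nat
  assumes "n \<ge> 1"
  shows "(fact (2*n))^2 / (fact (2*n - 1) * fact (2*n + 1)) =
    (\<Sum>k=1..n. real ((2*n) choose (2*k)) * 2^(2*k) * bernoulli (2*k) / real (2*n - 2*k + 1))"
proof -
  have absorb: "real ((2*n) choose (2*k)) * (2^(2*k) * bernoulli (2*k)) / real (2*n - 2*k + 1)
      = real ((2*n+1) choose (2*k)) * (2^(2*k) * bernoulli (2*k)) / real (2*n+1)"
    if "k \<in> {1..n}" for k
    using that by (intro binomial_absorb_real) simp
  have "(fact (2*n))^2 / (fact (2*n - 1) * fact (2*n + 1)) = real (2*n) / real (2*n+1)"
    by (rule fact_square_quotient) (use assms in simp)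
  also have "\<dots> = (\<Sum>k=1..n. real ((2*n+1) choose (2*k)) * 2^(2*k) * bernoulli (2*k) / real (2*n+1))"
    unfolding sum_divide_distrib[symmetric] bernoulli_even_binomial_sum ..
  also have "\<dots> = (\<Sum>k=1..n. real ((2*n) choose (2*k)) * 2^(2*k) * bernoulli (2*k) / real (2*n - 2*k + 1))"
    by (rule sum.cong) (simp_all only: mult.assoc absorb)
  finally show ?thesis .
qed

end
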